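(* For every integer $n\ge 0$, $c_5(n)$ is odd if $n=(7j^2+j)/2$ for some $j\in\mathbb{Z}$, and $c_5(n)$ is even otherwise.
   Context: A partition of $n\ge 0$ is a finite multiset of positive integers summing to $n$; the empty partition is the partition of $0$. For $n\ge 0$, $c_5(n)$ denotes the number of partitions $\lambda$ of $n$ such that either (a) all parts of $\lambda$ are even and distinct, or (b) there is an integer $j\ge 1$ such that the set of odd parts of $\lambda$ is exactly $\{1,3,\dots,2j-1\}$, each of these appearing exactly two or three times, and the even parts of $\lambda$ are distinct and each at least $4j+2$ (i.e. at least twice the largest odd part plus $4$). *)

theory Defs
  imports Main "HOL-Library.Multiset"
begin

definition is_partition :: "nat \<Rightarrow> nat multiset \<Rightarrow> bool" where
  "is_partition n M \<longleftrightarrow> (\<forall>x\<in>#M. 0 < x) \<and> sum_mset M = n"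

definition c5_condA :: "nat multiset \<Rightarrow> bool" where
  "c5_condA M \<longleftrightarrow> (\<forall>x\<in>#M. even x) \<and> (\<forall>x. count M x \<le> 1)"

definition c5_condB :: "nat multiset \<Rightarrow> bool" where
  "c5_condB M \<longleftrightarrow> (\<exists>j::nat. 1 \<le> j \<and>
      {x \<in> set_mset M. odd x} = {2*i - 1 | i. 1 \<le> i \<and> i \<le> j} \<and>
      (\<forall>x\<in>#M. odd x \<longrightarrow> count M x = 2 \<or> count M x = 3) \<and>
      (\<forall>x\<in>#M. even x \<longrightarrow> count M x = 1 \<and> 4*j + 2 \<le> x))"

definition c5 :: "nat \<Rightarrow> nat" where
  "c5 n = card {M. is_partition n M \<and> (c5_condA M \<or> c5_condB M)}"

end

theory Submission
  imports Defs "HOL-Library.Groups_Big_Fun" "HOL-Computational_Algebra.Formal_Power_Series" "HOL-Library.Z2"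
begin

text \<open>
  Work with power series over Z/2Z (type \<open>bit\<close>), where all signs disappear. There the
  finite pentagonal identity reads (q;q^2)_n = sum_r q^(r(3r-1)/2) [2n, n-r]_{q^2}. Consider
  S = sum_{j<=N} q^(2j^2) (q;q^2)_j (q^(4j+2);q^2)_(2N-2j) u_j with N large. In the degrees
  n <= N that matter, the factor u_j is 1 and the rest generates the partitions counted by c5
  whose odd parts are 1, ..., 2j-1: q^(2j^2) for these parts taken twice, (q;q^2)_j = (-q;q^2)_j
  for their optional third copies and (-q^(4j+2);q^2)_(2N-2j) for the distinct even parts.
  Inserting the pentagonal identity into S and interchanging the sums, the sum over j collapses
  by a telescoping q-binomial identity, leaving sum_r q^(r(3r-1)/2 + 2r^2) u'_r with u'_r again
  invisible in the relevant degrees. So the coefficient of q^n is 1 exactly when 2n = 7r^2 - r,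
  an equation with at most one solution r.
\<close>

section \<open>Gaussian binomial coefficients\<close>

definition qpoch :: "'a::comm_ring_1 \<Rightarrow> 'a \<Rightarrow> nat \<Rightarrow> 'a" where
  "qpoch q a n = (\<Prod>i<n. 1 - a * q^i)"

abbreviation qfact :: "'a::comm_ring_1 \<Rightarrow> nat \<Rightarrow> 'a" where
  "qfact q n \<equiv> qpoch q q n"

lemma qpoch_0 [simp]: "qpoch q a 0 = 1"
  by (simp add: qpoch_def)

lemma qpoch_Suc: "qpoch q a (Suc n) = qpoch q a n * (1 - a * q^n)"
  by (simp add: qpoch_def)

lemma qpoch_add: "qpoch q a (m + n) = qpoch q a m * qpoch q (a * q^m) n"
  by (induction n) (simp_all add: qpoch_Suc power_add algebra_simps)

lemma qpoch_Suc_left: "qpoch q a (Suc n) = (1 - a) * qpoch q (a * q) n"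
  using qpoch_add[of q a 1 n] by (simp add: qpoch_def)

lemma qfact_Suc: "qfact q (Suc n) = qfact q n * (1 - q^Suc n)"
  by (simp add: qpoch_Suc)

lemma qfact_mult_qpoch: "qfact q m * qpoch q (q^Suc m) n = qfact q (m + n)"
  using qpoch_add[of q q m n] by simp

fun qbinomial :: "'a::comm_ring_1 \<Rightarrow> nat \<Rightarrow> nat \<Rightarrow> 'a" where
  "qbinomial q n 0 = 1"
| "qbinomial q 0 (Suc k) = 0"
| "qbinomial q (Suc n) (Suc k) = qbinomial q n k + q^Suc k * qbinomial q n (Suc k)"

lemma qbinomial_eq_0: "n < k \<Longrightarrow> qbinomial q n k = 0"
proof (induction n arbitrary: k)
  case 0
  then show ?case by (cases k) auto
next
  case (Suc n)
  then show ?case by (cases k) auto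
qed

lemma qbinomial_qfact:
  "k \<le> n \<Longrightarrow> qbinomial q n k * qfact q k * qfact q (n - k) = qfact q n"
proof (induction n arbitrary: k)
  case 0
  then show ?case by simp
next
  case (Suc n)
  show ?case
  proof (cases k)
    case 0
    then show ?thesis by simp
  next
    case (Suc k')
    have low: "qbinomial q n k' * qfact q (Suc k') * qfact q (n - k') = qfact q n * (1 - q^Suc k')"
      using Suc.IH[of k'] Suc.prems Suc by (simp add: qfact_Suc algebra_simps)
    show ?thesis
    proof (cases "k' = n")
      case True
      then show ?thesis using low Suc by (simp add: qbinomial_eq_0 qfact_Suc)
    next
      case False
      then have kn: "Suc k' \<le> n" using Suc.prems Suc by simp
      then have "qfact q (n - k') = qfact q (n - Suc k') * (1 - q^(n - k'))"
        by (metis Suc_diff_Suc Suc_le_eq qfact_Suc)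
      then have high: "qbinomial q n (Suc k') * qfact q (Suc k') * qfact q (n - k')
          = qfact q n * (1 - q^(n - k'))"
        using Suc.IH[OF kn] by (metis mult.assoc)
      have pw: "q^Suc k' * q^(n - k') = q^Suc n"
        using kn by (metis Suc_leD add_Suc le_add_diff_inverse power_add)
      have "qbinomial q (Suc n) k * qfact q k * qfact q (Suc n - k)
          = qbinomial q n k' * qfact q (Suc k') * qfact q (n - k')
            + q^Suc k' * (qbinomial q n (Suc k') * qfact q (Suc k') * qfact q (n - k'))"
        using Suc by (simp add: algebra_simps)
      also have "\<dots> = qfact q n * (1 - q^Suc k' * q^(n - k'))"
        unfolding low high by (simp add: algebra_simps)
      also have "\<dots> = qfact q (Suc n)"
        by (simp only: pw qfact_Suc)
      finally show ?thesis .
    qed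
  qed
qed

lemma qbinomial_eqI:
  fixes q x :: "'a::idom"
  assumes "\<And>k. qfact q k \<noteq> 0" and "k \<le> n"
    and "x * qfact q k * qfact q (n - k) = qfact q n"
  shows "x = qbinomial q n k"
proof -
  have "x * (qfact q k * qfact q (n - k)) = qbinomial q n k * (qfact q k * qfact q (n - k))"
    using assms(3) qbinomial_qfact[OF assms(2), of q] by (simp add: mult.assoc)
  then show ?thesis
    using assms(1) by simp
qed

lemma qbinomial_symmetric:
  fixes q :: "'a::idom"
  assumes "\<And>k. qfact q k \<noteq> 0" and "k \<le> n"
  shows "qbinomial q n (n - k) = qbinomial q n k"
  using qbinomial_qfact[of "n - k" n q] assms
  by (intro qbinomial_eqI) (simp_all add: algebra_simps)

lemma qbinomial_Suc_Suc':
  fixes q :: "'a::idom"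
  assumes nz: "\<And>k. qfact q k \<noteq> 0" and kn: "k \<le> n"
  shows "qbinomial q (Suc n) (Suc k) = q^(n - k) * qbinomial q n k + qbinomial q n (Suc k)"
proof (cases "k = n")
  case True
  then show ?thesis by (simp add: qbinomial_eq_0)
next
  case False
  then have kn': "Suc k \<le> n" using kn by simp
  have low: "qbinomial q n k * qfact q (Suc k) * qfact q (n - k) = qfact q n * (1 - q^Suc k)"
    using qbinomial_qfact[OF kn, of q] by (simp add: qfact_Suc algebra_simps)
  have "qfact q (n - k) = qfact q (n - Suc k) * (1 - q^(n - k))"
    using kn' by (metis Suc_diff_Suc Suc_le_eq qfact_Suc)
  then have high: "qbinomial q n (Suc k) * qfact q (Suc k) * qfact q (n - k)
      = qfact q n * (1 - q^(n - k))"
    using qbinomial_qfact[OF kn', of q] by (metis mult.assoc)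
  have pw: "q^(n - k) * q^Suc k = q^Suc n"
    using kn by (metis add_Suc_right le_add_diff_inverse2 power_add)
  have "(q^(n - k) * qbinomial q n k + qbinomial q n (Suc k)) * qfact q (Suc k) * qfact q (Suc n - Suc k)
      = q^(n - k) * (qbinomial q n k * qfact q (Suc k) * qfact q (n - k))
        + qbinomial q n (Suc k) * qfact q (Suc k) * qfact q (n - k)"
    by (simp add: algebra_simps)
  also have "\<dots> = qfact q n * (1 - q^(n - k) * q^Suc k)"
    unfolding low high by (simp add: algebra_simps)
  also have "\<dots> = qfact q (Suc n)"
    by (simp only: pw qfact_Suc)
  finally show ?thesis
    using qbinomial_eqI[OF nz, of "Suc k" "Suc n"] kn by simp
qed

definition telescoping_sum :: "'a::comm_ring_1 \<Rightarrow> 'a \<Rightarrow> nat \<Rightarrow> 'a" where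
  "telescoping_sum q z n =
     (\<Sum>m\<le>n. z^m * q^(m^2) * qbinomial q n m * qpoch q (z * q^Suc m) (n - m))"

lemma telescoping_sum_Suc: "telescoping_sum q z (Suc n) = telescoping_sum q (z * q) n"
proof -
  define A where "A m = z^m * q^(m^2 + m) * qbinomial q n m * qpoch q (z * q^(m + 2)) (n - m)" for m
  define B where "B m = z^(m + 1) * q^((m + 1)^2) * qbinomial q n m * qpoch q (z * q^(m + 2)) (n - m)" for m
  define f where "f m = z^m * q^(m^2) * qbinomial q (Suc n) m * qpoch q (z * q^Suc m) (Suc n - m)" for m
  have f0: "f 0 = A 0 - B 0"
    unfolding f_def A_def B_def by (simp add: qpoch_Suc_left algebra_simps power2_eq_square)
  have fSuc: "f (Suc m) = B m + (A (Suc m) - B (Suc m))" if "m \<le> n" for m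
  proof (cases "m = n")
    case True
    then show ?thesis unfolding f_def A_def B_def by (simp add: qbinomial_eq_0)
  next
    case False
    define C where "C = qpoch q (z * q^(Suc m + 2)) (n - Suc m)"
    have split: "qpoch q (z * q^(m + 2)) (n - m) = (1 - z * q^(m + 2)) * C"
    proof -
      have "n - m = Suc (n - Suc m)" "z * q^(m + 2) * q = z * q^(Suc m + 2)"
        using that False by (simp_all add: mult.assoc)
      then show ?thesis unfolding C_def by (simp only: qpoch_Suc_left)
    qed
    have A: "A (Suc m) = z^(m + 1) * q^((m + 1)^2 + m + 1) * qbinomial q n (m + 1) * C"
      and B: "B (Suc m) = z^(m + 2) * q^((m + 2)^2) * qbinomial q n (m + 1) * C"
      unfolding A_def B_def C_def by simp_all
    have "f (Suc m) = B m + z^(m + 1) * q^((m + 1)^2 + m + 1) * qbinomial q n (m + 1)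
        * qpoch q (z * q^(m + 2)) (n - m)"
      unfolding f_def B_def by (simp add: algebra_simps power_add power2_eq_square)
    also have "z^(m + 1) * q^((m + 1)^2 + m + 1) * qbinomial q n (m + 1) * qpoch q (z * q^(m + 2)) (n - m)
        = A (Suc m) - B (Suc m)"
      unfolding A B split by (simp add: algebra_simps power_add power2_eq_square)
    finally show ?thesis .
  qed
  have "telescoping_sum q z (Suc n) = f 0 + (\<Sum>m\<le>n. f (Suc m))"
    unfolding telescoping_sum_def f_def by (rule sum.atMost_Suc_shift)
  also have "(\<Sum>m\<le>n. f (Suc m)) = (\<Sum>m\<le>n. A (Suc m)) + (\<Sum>m\<le>n. B m - B (Suc m))"
    by (simp add: fSuc sum.distrib[symmetric] sum_subtractf[symmetric] algebra_simps)
  also have "(\<Sum>m\<le>n. B m - B (Suc m)) = B 0 - B (Suc n)"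
    by (rule sum_telescope)
  also have "B (Suc n) = 0"
    unfolding B_def by (simp add: qbinomial_eq_0)
  also have "f 0 + ((\<Sum>m\<le>n. A (Suc m)) + (B 0 - 0)) = A 0 + (\<Sum>m\<le>n. A (Suc m))"
    using f0 by simp
  also have "\<dots> = (\<Sum>m\<le>Suc n. A m)"
    by (rule sum.atMost_Suc_shift[symmetric])
  also have "\<dots> = (\<Sum>m\<le>n. A m)"
    unfolding A_def by (simp add: qbinomial_eq_0)
  also have "\<dots> = telescoping_sum q (z * q) n"
    unfolding telescoping_sum_def A_def
    by (intro sum.cong) (simp_all add: algebra_simps power_add power2_eq_square)
  finally show ?thesis .
qed

lemma telescoping_sum_eq_1: "telescoping_sum q z n = 1"
proof (induction n arbitrary: z)
  case 0
  then show ?case by (simp add: telescoping_sum_def)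
next
  case (Suc n)
  then show ?case by (simp add: telescoping_sum_Suc)
qed

section \<open>A pentagonal q-binomial sum in characteristic two\<close>

definition qbinomial_int :: "'a::comm_ring_1 \<Rightarrow> nat \<Rightarrow> int \<Rightarrow> 'a" where
  "qbinomial_int q m k = (if k < 0 then 0 else qbinomial q m (nat k))"

lemma qbinomial_int_nonzeroD:
  assumes "qbinomial_int q m k \<noteq> 0"
  shows "0 \<le> k \<and> k \<le> int m"
proof -
  have "0 \<le> k" and "qbinomial q m (nat k) \<noteq> 0"
    using assms by (auto simp: qbinomial_int_def split: if_splits)
  then show ?thesis
    using qbinomial_eq_0[of m "nat k" q] by linarith
qed

lemma qbinomial_int_Suc:
  "qbinomial_int q (Suc m) k = qbinomial_int q m (k - 1) + q^nat k * qbinomial_int q m k"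
proof (cases "k \<le> 0")
  case True
  then show ?thesis by (cases "k = 0") (simp_all add: qbinomial_int_def)
next
  case False
  then have "nat k = Suc (nat (k - 1))"
    by arith
  then show ?thesis
    using False by (simp add: qbinomial_int_def)
qed

lemma qbinomial_int_Suc':
  fixes q :: "'a::idom"
  assumes nz: "\<And>k. qfact q k \<noteq> 0"
  shows "qbinomial_int q (Suc m) k = q^nat (int m + 1 - k) * qbinomial_int q m (k - 1) + qbinomial_int q m k"
proof (cases "k \<le> 0")
  case True
  then show ?thesis by (cases "k = 0") (simp_all add: qbinomial_int_def)
next
  case False
  define j where "j = nat (k - 1)"
  have j: "nat k = Suc j" "nat (k - 1) = j" "0 < k"
    using False unfolding j_def by arith+
  show ?thesis
  proof (cases "j \<le> m")
    case True
    then have "nat (int m + 1 - k) = m - j"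
      using j by arith
    then show ?thesis
      using j qbinomial_Suc_Suc'[OF nz True] by (simp add: qbinomial_int_def)
  next
    case False
    then show ?thesis
      using j by (simp add: qbinomial_int_def qbinomial_eq_0)
  qed
qed

lemma qbinomial_int_symmetric:
  fixes q :: "'a::idom"
  assumes nz: "\<And>k. qfact q k \<noteq> 0"
  shows "qbinomial_int q m (int m - k) = qbinomial_int q m k"
proof (cases "0 \<le> k \<and> k \<le> int m")
  case True
  then obtain j where "k = int j" "j \<le> m"
    by (metis nonneg_int_cases of_nat_le_iff)
  moreover have "nat (int m - int j) = m - j"
    by simp
  ultimately show ?thesis
    using qbinomial_symmetric[OF nz] by (simp add: qbinomial_int_def)
next
  case False
  then show ?thesis
    by (auto simp: qbinomial_int_def qbinomial_eq_0)
qed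

lemma finite_support_qbinomial_int:
  assumes "\<And>r. g r \<noteq> 0 \<Longrightarrow> qbinomial_int q m (c - r) \<noteq> 0"
  shows "finite {r. g r \<noteq> 0}"
proof (rule finite_subset[of _ "{c - int m..c}"])
  show "{r. g r \<noteq> 0} \<subseteq> {c - int m..c}"
    using qbinomial_int_nonzeroD assms by fastforce
qed simp

lemma uminus_eq_self_char_2:
  assumes "(2::'a::comm_ring_1) = 0"
  shows "- x = (x::'a)"
  using assms by (metis add_eq_0_iff2 mult_2 mult_zero_left)

lemma Sum_any_eq_0_char_2:
  fixes f :: "int \<Rightarrow> 'a::comm_ring_1"
  assumes "(2::'a) = 0" and fin: "finite {r. f r \<noteq> 0}" and sym: "\<And>r. f (-1 - r) = f r"
  shows "Sum_any f = 0"
proof -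
  define g where "g r = (if 0 \<le> r then f r else 0)" for r
  define h where "h r = (if r < 0 then f r else 0)" for r
  have "Sum_any f = Sum_any (\<lambda>r. g r + h r)"
    by (rule Sum_any.cong) (simp add: g_def h_def)
  also have "\<dots> = Sum_any g + Sum_any h"
    by (rule Sum_any.distrib) (rule finite_subset[OF _ fin], auto simp: g_def h_def)+
  also have "Sum_any h = Sum_any g"
  proof (rule Sum_any.reindex_cong[of "\<lambda>r. -1 - r"])
    show "bij (\<lambda>r::int. -1 - r)"
      by (rule bij_betw_byWitness[of _ "\<lambda>r. -1 - r"]) auto
    show "h \<circ> (\<lambda>r. -1 - r) = g"
      by (rule ext) (auto simp: h_def g_def sym)
  qed
  finally show ?thesis
    using assms(1) by (metis mult_2 mult_zero_left)
qed

definition pent :: "int \<Rightarrow> int" where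
  "pent r = r * (3 * r - 1) div 2"

lemma two_pent: "2 * pent r = r * (3 * r - 1)"
proof -
  have "even (r * (3 * r - 1))"
    by (cases "even r") auto
  then show ?thesis
    unfolding pent_def by simp
qed

lemma pent_nonneg: "0 \<le> pent r"
proof -
  have "0 \<le> r * (3 * r - 1)"
    by (cases "r \<ge> 1") (simp_all add: mult_nonpos_nonpos)
  then show ?thesis
    using two_pent[of r] by linarith
qed

lemma pent_reflect: "pent (-1 - r) = pent r + 4 * r + 2"
  using two_pent[of r] two_pent[of "-1 - r"] by (simp add: algebra_simps)

lemma pent_plus_1: "pent (r + 1) = pent r + 3 * r + 1"
  using two_pent[of r] two_pent[of "r + 1"] by (simp add: algebra_simps)

lemma pent_uminus: "pent (- r) = pent r + r"
  using two_pent[of r] two_pent[of "- r"] by (simp add: algebra_simps)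

lemma power_nat_add_int:
  "0 \<le> a \<Longrightarrow> 0 \<le> b \<Longrightarrow> (q::'a::monoid_mult)^nat a * q^nat b = q^nat (a + b)"
  by (simp add: power_add[symmetric] nat_add_distrib)

lemma power2_power_nat_int: "0 \<le> a \<Longrightarrow> ((q::'a::monoid_mult)^2)^nat a = q^nat (2 * a)"
  by (simp add: power_mult[symmetric] nat_mult_distrib)

definition pent_sum :: "'a::comm_ring_1 \<Rightarrow> nat \<Rightarrow> int \<Rightarrow> 'a" where
  "pent_sum q m c = (\<Sum>r. q^nat (pent r) * qbinomial_int (q^2) m (c - r))"

lemma pent_sum_0: "pent_sum q 0 0 = 1"
proof -
  have "pent_sum q 0 0 = (\<Sum>r::int. if r = 0 then 1 else 0)"
    unfolding pent_sum_def
    by (rule Sum_any.cong) (auto simp: qbinomial_int_def pent_def qbinomial_eq_0)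
  then show ?thesis
    by simp
qed

text \<open>The terms for \<open>r\<close> and \<open>-1 - r\<close> coincide (by \<open>pent_reflect\<close> and the symmetry of the
  q-binomial coefficients), so they cancel in pairs.\<close>

lemma pent_sum_twisted_eq_0:
  fixes q :: "'a::idom"
  assumes two: "(2::'a) = 0" and nz: "\<And>k. qfact (q^2) k \<noteq> 0" and n: "1 \<le> n"
  shows "(\<Sum>r. q^nat (pent r) * (q^2)^nat (int n + r) * qbinomial_int (q^2) (2*n - 1) (int n - 1 - r)) = 0"
    (is "Sum_any ?W = 0")
proof (rule Sum_any_eq_0_char_2[OF two])
  show "finite {r. ?W r \<noteq> 0}"
    by (rule finite_support_qbinomial_int[where c = "int n - 1"]) auto
  fix r
  have "int (2*n - 1) - (int n + r) = int n - 1 - r"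
    using n by linarith
  then have sym: "qbinomial_int (q^2) (2*n - 1) (int n + r) = qbinomial_int (q^2) (2*n - 1) (int n - 1 - r)"
    by (metis qbinomial_int_symmetric[OF nz])
  show "?W (-1 - r) = ?W r"
  proof (cases "qbinomial_int (q^2) (2*n - 1) (int n - 1 - r) = 0")
    case True
    then show ?thesis using sym by simp
  next
    case False
    then have "- int n \<le> r" "r \<le> int n - 1"
      using qbinomial_int_nonzeroD[OF False] n by auto
    then have "q^nat (pent (-1 - r)) * (q^2)^nat (int n + (-1 - r)) = q^nat (pent r) * (q^2)^nat (int n + r)"
      using pent_nonneg[of r] pent_nonneg[of "-1 - r"]
      by (simp add: power2_power_nat_int power_nat_add_int pent_reflect algebra_simps)
    then show ?thesis
      using sym by (simp add: algebra_simps)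
  qed
qed

lemma pent_sum_reduce_even:
  fixes q :: "'a::idom"
  assumes two: "(2::'a) = 0" and nz: "\<And>k. qfact (q^2) k \<noteq> 0" and n: "1 \<le> n"
  shows "pent_sum q (2*n) (int n) = pent_sum q (2*n - 1) (int n)"
proof -
  define m where "m = 2*n - 1"
  have sm: "2*n = Suc m"
    using n m_def by simp
  define W where "W r = q^nat (pent r) * (q^2)^nat (int n + r) * qbinomial_int (q^2) m (int n - 1 - r)" for r
  have "pent_sum q (2*n) (int n) = (\<Sum>r. W r + q^nat (pent r) * qbinomial_int (q^2) m (int n - r))"
  proof -
    have "int m + 1 - (int n - r) = int n + r" for r
      using sm by simp
    then show ?thesis
      unfolding pent_sum_def sm W_def
      by (intro Sum_any.cong) (simp add: qbinomial_int_Suc'[OF nz] algebra_simps)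
  qed
  also have "\<dots> = Sum_any W + pent_sum q m (int n)"
    unfolding pent_sum_def
    by (rule Sum_any.distrib; rule finite_support_qbinomial_int) (auto simp: W_def)
  also have "Sum_any W = 0"
    using pent_sum_twisted_eq_0[OF two nz n] unfolding W_def m_def .
  finally show ?thesis
    by (simp add: m_def)
qed

lemma power_pent_shift:
  assumes "s \<le> int n"
  shows "(q::'a::comm_ring_1)^nat (pent (s + 1)) * (q^2)^nat (int n - s) = q * (q^2)^n * q^nat (pent (-s))"
proof -
  have "q^nat (pent (s + 1)) * (q^2)^nat (int n - s) = q^nat (pent (s + 1) + 2 * (int n - s))"
    using assms pent_nonneg[of "s + 1"] by (simp add: power2_power_nat_int power_nat_add_int)
  also have "pent (s + 1) + 2 * (int n - s) = (2 * int n + 1) + pent (-s)"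
    by (simp add: pent_plus_1 pent_uminus)
  also have "q^nat ((2 * int n + 1) + pent (-s)) = q^nat (2 * int n + 1) * q^nat (pent (-s))"
    using pent_nonneg[of "-s"] by (simp add: power_nat_add_int)
  also have "q^nat (2 * int n + 1) = q * (q^2)^n"
    by (simp add: nat_add_distrib nat_mult_distrib power_mult[symmetric])
  finally show ?thesis .
qed

lemma pent_sum_shifted:
  fixes q :: "'a::idom"
  assumes nz: "\<And>k. qfact (q^2) k \<noteq> 0"
  shows "(\<Sum>r. q^nat (pent r) * (q^2)^nat (int n + 1 - r) * qbinomial_int (q^2) (2*n) (int n + 1 - r))
       = q * (q^2)^n * pent_sum q (2*n) (int n)"
proof -
  define V where "V r = q^nat (pent r) * (q^2)^nat (int n + 1 - r) * qbinomial_int (q^2) (2*n) (int n + 1 - r)" for r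
  define V' where "V' s = q^nat (pent (-s)) * qbinomial_int (q^2) (2*n) (int n - s)" for s
  have "Sum_any V = (\<Sum>s. V (s + 1))"
    by (rule Sum_any.reindex_cong[of "\<lambda>s. s + 1"])
       (auto intro: bij_betw_byWitness[of _ "\<lambda>s. s - 1"])
  also have "\<dots> = (\<Sum>s. q * (q^2)^n * V' s)"
  proof (rule Sum_any.cong)
    fix s
    show "V (s + 1) = q * (q^2)^n * V' s"
    proof (cases "qbinomial_int (q^2) (2*n) (int n - s) = 0")
      case True
      then show ?thesis by (simp add: V_def V'_def)
    next
      case False
      then have s: "s \<le> int n"
        using qbinomial_int_nonzeroD[OF False] by auto
      then show ?thesis
        using power_pent_shift[of s n q] by (simp add: V_def V'_def algebra_simps)
    qed
  qed
  also have "\<dots> = q * (q^2)^n * Sum_any V'"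
    by (rule Sum_any_right_distrib[symmetric])
       (rule finite_support_qbinomial_int, auto simp: V'_def)
  also have "Sum_any V' = (\<Sum>t. V' (-t))"
    by (rule Sum_any.reindex_cong[of uminus]) (auto intro: bij_betw_byWitness[of _ uminus])
  also have "\<dots> = pent_sum q (2*n) (int n)"
    unfolding pent_sum_def
  proof (rule Sum_any.cong)
    fix t
    have "qbinomial_int (q^2) (2*n) (int n + t) = qbinomial_int (q^2) (2*n) (int n - t)"
      using qbinomial_int_symmetric[OF nz, of "2*n" "int n + t"] by simp
    then show "V' (-t) = q^nat (pent t) * qbinomial_int (q^2) (2*n) (int n - t)"
      by (simp add: V'_def)
  qed
  finally show ?thesis
    unfolding V_def .
qed

lemma pent_sum_reduce_odd:
  fixes q :: "'a::idom"
  assumes two: "(2::'a) = 0" and nz: "\<And>k. qfact (q^2) k \<noteq> 0"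
  shows "pent_sum q (Suc (2*n)) (int n + 1) = (1 - q * (q^2)^n) * pent_sum q (2*n) (int n)"
proof -
  have "pent_sum q (Suc (2*n)) (int n + 1)
      = (\<Sum>r. q^nat (pent r) * qbinomial_int (q^2) (2*n) (int n - r)
           + q^nat (pent r) * (q^2)^nat (int n + 1 - r) * qbinomial_int (q^2) (2*n) (int n + 1 - r))"
    unfolding pent_sum_def by (intro Sum_any.cong) (simp add: qbinomial_int_Suc algebra_simps)
  also have "\<dots> = pent_sum q (2*n) (int n)
      + (\<Sum>r. q^nat (pent r) * (q^2)^nat (int n + 1 - r) * qbinomial_int (q^2) (2*n) (int n + 1 - r))"
    unfolding pent_sum_def
    by (rule Sum_any.distrib; rule finite_support_qbinomial_int) auto
  also have "\<dots> = pent_sum q (2*n) (int n) + q * (q^2)^n * pent_sum q (2*n) (int n)"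
    by (simp only: pent_sum_shifted[OF nz])
  finally show ?thesis
    using uminus_eq_self_char_2[OF two, of "q * (q^2)^n * pent_sum q (2*n) (int n)"]
    by (simp add: algebra_simps)
qed

theorem pent_sum_eq_qpoch:
  fixes q :: "'a::idom"
  assumes two: "(2::'a) = 0" and nz: "\<And>k. qfact (q^2) k \<noteq> 0"
  shows "pent_sum q (2*n) (int n) = qpoch (q^2) q n"
proof (induction n)
  case 0
  then show ?case by (simp add: pent_sum_0)
next
  case (Suc n)
  have "pent_sum q (2 * Suc n) (int (Suc n)) = pent_sum q (2 * Suc n - 1) (int (Suc n))"
    by (rule pent_sum_reduce_even[OF two nz]) simp
  also have "\<dots> = pent_sum q (Suc (2*n)) (int n + 1)"
    by (simp add: add.commute)
  also have "\<dots> = (1 - q * (q^2)^n) * pent_sum q (2*n) (int n)"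
    by (rule pent_sum_reduce_odd[OF two nz])
  also have "\<dots> = qpoch (q^2) q (Suc n)"
    using Suc.IH by (simp add: qpoch_Suc algebra_simps)
  finally show ?case .
qed

section \<open>A finite Bailey-type identity in characteristic two\<close>

definition lhs_weight :: "'a::comm_ring_1 \<Rightarrow> nat \<Rightarrow> nat \<Rightarrow> 'a" where
  "lhs_weight p N j = qpoch p (p^(2*j + 1)) (2*N - 2*j) * qpoch p (p^(N - j + 1)) j"

definition rhs_weight :: "'a::comm_ring_1 \<Rightarrow> nat \<Rightarrow> nat \<Rightarrow> 'a" where
  "rhs_weight p N s = qpoch p (p^(N + s + 1)) (N - s) * qpoch p (p^(N - s + 1)) s"

lemma lhs_weight_qfact:
  assumes "j \<le> N"
  shows "qfact p (2*j) * qfact p (N - j) * lhs_weight p N j = qfact p (2*N) * qfact p N"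
proof -
  have "qfact p (2*j) * qfact p (N - j) * lhs_weight p N j
      = (qfact p (2*j) * qpoch p (p^Suc (2*j)) (2*N - 2*j)) * (qfact p (N - j) * qpoch p (p^Suc (N - j)) j)"
    unfolding lhs_weight_def by (simp only: mult_ac Suc_eq_plus1)
  also have "\<dots> = qfact p (2*N) * qfact p N"
    using assms by (simp only: qfact_mult_qpoch) simp
  finally show ?thesis .
qed

lemma rhs_weight_qfact:
  assumes "s \<le> N"
  shows "qfact p (N + s) * qfact p (N - s) * rhs_weight p N s = qfact p (2*N) * qfact p N"
proof -
  have "qfact p (N + s) * qfact p (N - s) * rhs_weight p N s
      = (qfact p (N + s) * qpoch p (p^Suc (N + s)) (N - s)) * (qfact p (N - s) * qpoch p (p^Suc (N - s)) s)"
    unfolding rhs_weight_def by (simp only: mult_ac Suc_eq_plus1)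
  also have "\<dots> = qfact p (2*N) * qfact p N"
    using assms by (simp only: qfact_mult_qpoch) (simp add: mult_2)
  finally show ?thesis .
qed

lemma bailey_inner_term:
  fixes p :: "'a::idom"
  assumes nz: "\<And>k. qfact p k \<noteq> 0" and sm: "s + m \<le> N"
  shows "p^((s + m)^2) * qbinomial p (2*(s + m)) m * lhs_weight p N (s + m)
       = p^(s^2) * rhs_weight p N s * ((p^(2*s))^m * p^(m^2) * qbinomial p (N - s) m
           * qpoch p (p^(2*s) * p^Suc m) (N - s - m))"
proof -
  define j where "j = s + m"
  define D where "D = qfact p m * qfact p (2*s + m) * qfact p (N - s - m)"
  have "p^(j^2) * qbinomial p (2*j) m * lhs_weight p N j * D
      = p^(j^2) * ((qbinomial p (2*j) m * qfact p m * qfact p (2*j - m)) * qfact p (N - j) * lhs_weight p N j)"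
    unfolding D_def j_def by (simp add: algebra_simps)
  also have "\<dots> = p^(j^2) * (qfact p (2*N) * qfact p N)"
    using qbinomial_qfact[of m "2*j" p] lhs_weight_qfact[of j N p] sm unfolding j_def by simp
  finally have lhs: "p^(j^2) * qbinomial p (2*j) m * lhs_weight p N j * D
      = p^(j^2) * (qfact p (2*N) * qfact p N)" .
  have pj: "p^(s^2) * (p^(2*s))^m * p^(m^2) = p^(j^2)"
    unfolding j_def by (simp add: power2_sum power_add power_mult)
  have "p^(s^2) * rhs_weight p N s * ((p^(2*s))^m * p^(m^2) * qbinomial p (N - s) m
           * qpoch p (p^(2*s) * p^Suc m) (N - s - m)) * D
      = (p^(s^2) * (p^(2*s))^m * p^(m^2)) * (qbinomial p (N - s) m * qfact p m * qfact p (N - s - m))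
          * (qfact p (2*s + m) * qpoch p (p^Suc (2*s + m)) (N - s - m)) * rhs_weight p N s"
    unfolding D_def by (simp add: power_add algebra_simps)
  also have "\<dots> = p^(j^2) * (qfact p (N + s) * qfact p (N - s) * rhs_weight p N s)"
    using qbinomial_qfact[of m "N - s" p] qfact_mult_qpoch[of p "2*s + m" "N - s - m"] sm
    unfolding pj by (simp add: algebra_simps)
  also have "\<dots> = p^(j^2) * (qfact p (2*N) * qfact p N)"
    using rhs_weight_qfact[of s N p] sm by simp
  finally have "p^(j^2) * qbinomial p (2*j) m * lhs_weight p N j * D
      = p^(s^2) * rhs_weight p N s * ((p^(2*s))^m * p^(m^2) * qbinomial p (N - s) m
           * qpoch p (p^(2*s) * p^Suc m) (N - s - m)) * D"
    unfolding lhs by (rule sym)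
  moreover have "D \<noteq> 0"
    unfolding D_def using nz by simp
  ultimately show ?thesis
    unfolding j_def by simp
qed

lemma bailey_inner_sum:
  fixes p :: "'a::idom"
  assumes nz: "\<And>k. qfact p k \<noteq> 0" and sN: "s \<le> N"
  shows "(\<Sum>j\<le>N. p^(j^2) * qbinomial_int p (2*j) (int j - int s) * lhs_weight p N j)
       = p^(s^2) * rhs_weight p N s"
proof -
  define f where "f j = p^(j^2) * qbinomial_int p (2*j) (int j - int s) * lhs_weight p N j" for j
  have "(\<Sum>j\<le>N. f j) = (\<Sum>j\<in>{s..N}. f j)"
    by (rule sum.mono_neutral_right) (auto simp: f_def qbinomial_int_def)
  also have "\<dots> = (\<Sum>m\<in>{0..N - s}. f (m + s))"
    using sum.shift_bounds_cl_nat_ivl[of f 0 s "N - s"] sN by simp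
  also have "\<dots> = (\<Sum>m\<le>N - s. p^(s^2) * rhs_weight p N s * ((p^(2*s))^m * p^(m^2)
      * qbinomial p (N - s) m * qpoch p (p^(2*s) * p^Suc m) (N - s - m)))"
  proof (rule sum.cong)
    fix m
    assume "m \<in> {..N - s}"
    then have "s + m \<le> N"
      using sN by auto
    moreover have "f (m + s) = p^((s + m)^2) * qbinomial p (2*(s + m)) m * lhs_weight p N (s + m)"
      unfolding f_def qbinomial_int_def by (simp add: add.commute)
    ultimately show "f (m + s) = p^(s^2) * rhs_weight p N s * ((p^(2*s))^m * p^(m^2)
        * qbinomial p (N - s) m * qpoch p (p^(2*s) * p^Suc m) (N - s - m))"
      using bailey_inner_term[OF nz] by simp
  qed auto
  also have "\<dots> = p^(s^2) * rhs_weight p N s * telescoping_sum p (p^(2*s)) (N - s)"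
    unfolding telescoping_sum_def by (simp add: sum_distrib_left)
  finally show ?thesis
    unfolding f_def telescoping_sum_eq_1 by simp
qed

lemma bailey_inner_sum_int:
  fixes p :: "'a::idom"
  assumes nz: "\<And>k. qfact p k \<noteq> 0" and rN: "\<bar>r\<bar> \<le> int N"
  shows "(\<Sum>j\<le>N. p^(j^2) * qbinomial_int p (2*j) (int j - r) * lhs_weight p N j)
       = p^(nat \<bar>r\<bar>^2) * rhs_weight p N (nat \<bar>r\<bar>)"
proof -
  have "qbinomial_int p (2*j) (int j - r) = qbinomial_int p (2*j) (int j - int (nat \<bar>r\<bar>))" for j
  proof (cases "0 \<le> r")
    case False
    then have "int (2*j) - (int j - r) = int j - int (nat \<bar>r\<bar>)"
      by simp
    then show ?thesis
      by (metis qbinomial_int_symmetric[OF nz])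
  qed simp
  then show ?thesis
    using bailey_inner_sum[OF nz, of "nat \<bar>r\<bar>" N] rN by simp
qed

theorem bailey_identity_char_2:
  fixes q :: "'a::idom"
  assumes two: "(2::'a) = 0" and nz: "\<And>k. qfact (q^2) k \<noteq> 0"
  shows "(\<Sum>j\<le>N. (q^2)^(j^2) * qpoch (q^2) q j * lhs_weight (q^2) N j)
       = (\<Sum>r\<in>{-int N..int N}. q^nat (pent r) * (q^2)^(nat \<bar>r\<bar>^2) * rhs_weight (q^2) N (nat \<bar>r\<bar>))"
proof -
  have qpoch_eq: "qpoch (q^2) q j = (\<Sum>r\<in>{-int N..int N}. q^nat (pent r) * qbinomial_int (q^2) (2*j) (int j - r))"
    if "j \<le> N" for j
  proof -
    have "qpoch (q^2) q j = pent_sum q (2*j) (int j)"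
      using pent_sum_eq_qpoch[OF two nz] by simp
    also have "\<dots> = (\<Sum>r\<in>{-int N..int N}. q^nat (pent r) * qbinomial_int (q^2) (2*j) (int j - r))"
      unfolding pent_sum_def
      by (rule Sum_any.expand_superset) (use qbinomial_int_nonzeroD that in fastforce)+
    finally show ?thesis .
  qed
  have "(\<Sum>j\<le>N. (q^2)^(j^2) * qpoch (q^2) q j * lhs_weight (q^2) N j)
      = (\<Sum>j\<le>N. \<Sum>r\<in>{-int N..int N}.
           q^nat (pent r) * ((q^2)^(j^2) * qbinomial_int (q^2) (2*j) (int j - r) * lhs_weight (q^2) N j))"
    by (rule sum.cong) (simp_all add: qpoch_eq sum_distrib_left sum_distrib_right algebra_simps)
  also have "\<dots> = (\<Sum>r\<in>{-int N..int N}. \<Sum>j\<le>N.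
           q^nat (pent r) * ((q^2)^(j^2) * qbinomial_int (q^2) (2*j) (int j - r) * lhs_weight (q^2) N j))"
    by (rule sum.swap)
  also have "\<dots> = (\<Sum>r\<in>{-int N..int N}. q^nat (pent r) * (q^2)^(nat \<bar>r\<bar>^2) * rhs_weight (q^2) N (nat \<bar>r\<bar>))"
  proof (rule sum.cong)
    fix r
    assume "r \<in> {-int N..int N}"
    then have rN: "\<bar>r\<bar> \<le> int N"
      by auto
    show "(\<Sum>j\<le>N. q^nat (pent r) * ((q^2)^(j^2) * qbinomial_int (q^2) (2*j) (int j - r) * lhs_weight (q^2) N j))
        = q^nat (pent r) * (q^2)^(nat \<bar>r\<bar>^2) * rhs_weight (q^2) N (nat \<bar>r\<bar>)"
      unfolding sum_distrib_left[symmetric] bailey_inner_sum_int[OF nz rN] by (simp only: mult.assoc)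
  qed simp
  finally show ?thesis .
qed

section \<open>Truncated power series\<close>

lemma fps_cutoff_mult_eq_1:
  assumes F: "fps_cutoff n F = 1" and G: "fps_cutoff n G = (1 :: 'a::comm_ring_1 fps)"
  shows "fps_cutoff n (F * G) = 1"
proof (rule fps_ext)
  fix k
  show "fps_nth (fps_cutoff n (F * G)) k = fps_nth 1 k"
  proof (cases "k < n")
    case True
    have "fps_nth (F * G) k = fps_nth (fps_cutoff n F * G) k"
      using True by (rule fps_cutoff_left_mult_nth[symmetric])
    also have "\<dots> = fps_nth (fps_cutoff n G) k"
      using True by (simp add: F)
    finally show ?thesis
      using True by (simp add: G)
  next
    case False
    have "n \<noteq> 0"
      using F by (metis fps_cutoff_0 zero_neq_one)
    then show ?thesis
      using False by simp
  qed
qed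

lemma fps_cutoff_one_minus_X_power:
  "n < a \<Longrightarrow> fps_cutoff (Suc n) (1 - fps_X^a) = (1 :: 'a::comm_ring_1 fps)"
  by (rule fps_ext) simp

lemma fps_cutoff_qpoch_X_power:
  "n < k \<Longrightarrow> fps_cutoff (Suc n) (qpoch ((fps_X :: 'a::comm_ring_1 fps)^2) (fps_X^k) m) = 1"
proof (induction m)
  case 0
  then show ?case by (simp add: fps_cutoff_one)
next
  case (Suc m)
  have "qpoch ((fps_X :: 'a fps)^2) (fps_X^k) (Suc m)
      = qpoch (fps_X^2) (fps_X^k) m * (1 - fps_X^(k + 2*m))"
    by (simp add: qpoch_Suc power_mult[symmetric] power_add)
  then show ?case
    using Suc by (simp add: fps_cutoff_mult_eq_1 fps_cutoff_one_minus_X_power)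
qed

lemma fps_nth_mult_cutoff_eq_1:
  fixes A F :: "'a::comm_ring_1 fps"
  assumes "fps_cutoff (Suc n) F = 1"
  shows "fps_nth (A * F) n = fps_nth A n"
proof -
  have "fps_nth (A * F) n = fps_nth (A * fps_cutoff (Suc n) F) n"
    by (rule fps_cutoff_right_mult_nth[symmetric]) simp
  then show ?thesis
    using assms by simp
qed

lemma qfact_fps_X_nonzero: "qfact ((fps_X :: 'a::comm_ring_1 fps)^2) k \<noteq> 0"
proof -
  have "fps_cutoff 1 (qfact ((fps_X :: 'a fps)^2) k) = 1"
    using fps_cutoff_qpoch_X_power[of 0 2 k] by simp
  then show ?thesis
    by (metis fps_cutoff_zero zero_neq_one)
qed

lemma fps_nth_prod_one_plus_X_power:
  assumes "finite S"
  shows "fps_nth (\<Prod>a\<in>S. 1 + (fps_X :: 'a::comm_semiring_1 fps)^a) n = of_nat (card {T. T \<subseteq> S \<and> \<Sum>T = n})"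
proof -
  have "(\<Prod>a\<in>S. 1 + (fps_X :: 'a fps)^a) = (\<Sum>T\<in>Pow S. fps_X^(\<Sum>T))"
    using prod_add[OF assms, of "\<lambda>a. fps_X^a" "\<lambda>_. 1"]
    by (simp add: add.commute power_sum)
  then have "fps_nth (\<Prod>a\<in>S. 1 + (fps_X :: 'a fps)^a) n = (\<Sum>T\<in>Pow S. if n = \<Sum>T then 1 else 0)"
    by (simp add: fps_sum_nth)
  also have "\<dots> = of_nat (card {T \<in> Pow S. \<Sum>T = n})"
    using assms by (simp add: sum.If_cases Int_def eq_commute)
  finally show ?thesis
    by simp
qed

section \<open>The partitions counted by c5\<close>

definition small_odds :: "nat \<Rightarrow> nat set" where
  "small_odds j = {x. odd x \<and> x < 2*j}"

definition large_evens :: "nat \<Rightarrow> nat \<Rightarrow> nat set" where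
  "large_evens N j = {x. even x \<and> 4*j + 2 \<le> x \<and> x \<le> 4*N}"

definition optional_parts :: "nat \<Rightarrow> nat \<Rightarrow> nat set" where
  "optional_parts N j = small_odds j \<union> large_evens N j"

definition doubled_odds :: "nat \<Rightarrow> nat multiset" where
  "doubled_odds j = (\<Sum>i<j. replicate_mset 2 (2*i + 1))"

definition odd_count_parts :: "nat multiset \<Rightarrow> nat set" where
  "odd_count_parts M = {x. odd (count M x)}"

text \<open>\<open>c5_shape 0\<close> is condition (a) and, for \<open>j \<ge> 1\<close>, \<open>c5_shape j\<close> is condition (b) for this \<open>j\<close>.\<close>

definition c5_shape :: "nat \<Rightarrow> nat multiset \<Rightarrow> bool" where
  "c5_shape j M \<longleftrightarrow> {x \<in> set_mset M. odd x} = small_odds j \<and>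
      (\<forall>x\<in>#M. odd x \<longrightarrow> count M x = 2 \<or> count M x = 3) \<and>
      (\<forall>x\<in>#M. even x \<longrightarrow> count M x = 1 \<and> 4*j + 2 \<le> x)"

lemma small_odds_Suc: "small_odds (Suc j) = insert (2*j + 1) (small_odds j)"
  unfolding small_odds_def by (auto elim: oddE)

lemma count_doubled_odds: "count (doubled_odds j) x = (if x \<in> small_odds j then 2 else 0)"
proof (induction j)
  case 0
  then show ?case by (simp add: doubled_odds_def small_odds_def)
next
  case (Suc j)
  have "doubled_odds (Suc j) = doubled_odds j + replicate_mset 2 (2*j + 1)"
    by (simp add: doubled_odds_def)
  moreover have "2*j + 1 \<notin> small_odds j"
    by (simp add: small_odds_def)
  ultimately show ?case
    using Suc by (auto simp: small_odds_Suc)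
qed

lemma sum_doubled_odds: "sum_mset (doubled_odds j) = 2*j^2"
  by (induction j) (simp_all add: doubled_odds_def power2_eq_square algebra_simps)

lemma finite_optional_parts: "finite (optional_parts N j)"
  by (rule finite_subset[of _ "{..4*N + 2*j}"])
     (auto simp: optional_parts_def small_odds_def large_evens_def)

lemma odd_count_parts_subset_set_mset: "odd_count_parts M \<subseteq> set_mset M"
  by (auto simp: odd_count_parts_def dest!: odd_pos)

lemma finite_odd_count_parts: "finite (odd_count_parts M)"
  using odd_count_parts_subset_set_mset by (rule finite_subset) simp

lemma c5_shape_decompose:
  assumes "c5_shape j M"
  shows "M = mset_set (odd_count_parts M) + doubled_odds j"
proof (rule multiset_eqI)
  fix x
  have odd_parts: "{x \<in> set_mset M. odd x} = small_odds j"
    and odd_count: "x \<in># M \<Longrightarrow> odd x \<Longrightarrow> count M x = 2 \<or> count M x = 3"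
    and even_count: "x \<in># M \<Longrightarrow> even x \<Longrightarrow> count M x = 1"
    using assms unfolding c5_shape_def by auto
  have decomp: "count M x = (if odd (count M x) then 1 else 0) + (if x \<in> small_odds j then 2 else 0)"
  proof (cases "x \<in># M")
    case True
    show ?thesis
    proof (cases "odd x")
      case True
      then have "x \<in> small_odds j"
        using odd_parts \<open>x \<in># M\<close> by blast
      then show ?thesis
        using odd_count \<open>x \<in># M\<close> True by auto
    next
      case False
      then have "x \<notin> small_odds j"
        by (simp add: small_odds_def)
      then show ?thesis
        using even_count \<open>x \<in># M\<close> False by simp
    qed
  next
    case False
    then have "x \<notin> small_odds j"
      using odd_parts by blast
    then show ?thesis
      using False by (simp add: not_in_iff)
  qed
  moreover have "count (mset_set (odd_count_parts M)) x = (if odd (count M x) then 1 else 0)"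
    using finite_odd_count_parts[of M] by (simp add: count_mset_set' odd_count_parts_def)
  ultimately show "count M x = count (mset_set (odd_count_parts M) + doubled_odds j) x"
    by (simp add: count_doubled_odds)
qed

lemma odd_count_parts_subset:
  assumes "is_partition n M" and "c5_shape j M" and "n \<le> 4*N"
  shows "odd_count_parts M \<subseteq> optional_parts N j"
proof
  fix x
  assume "x \<in> odd_count_parts M"
  then have x: "x \<in># M"
    using odd_count_parts_subset_set_mset by blast
  show "x \<in> optional_parts N j"
  proof (cases "odd x")
    case True
    then show ?thesis
      using assms(2) x by (auto simp: c5_shape_def optional_parts_def)
  next
    case False
    obtain M' where "M = add_mset x M'"
      using x by (blast dest: multi_member_split)
    then have "x \<le> n"
      using assms(1) by (auto simp: is_partition_def)
    then show ?thesis
      using assms False x by (auto simp: c5_shape_def optional_parts_def large_evens_def)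
  qed
qed

lemma sum_mset_mset_set: "finite T \<Longrightarrow> sum_mset (mset_set T) = \<Sum>T"
  by (induction T rule: finite_induct) auto

lemma count_recompose:
  assumes "T \<subseteq> optional_parts N j"
  shows "count (mset_set T + doubled_odds j) x
       = (if x \<in> T then 1 else 0) + (if x \<in> small_odds j then 2 else 0)"
  using finite_subset[OF assms finite_optional_parts] by (simp add: count_doubled_odds)

lemma odd_count_parts_recompose:
  assumes "T \<subseteq> optional_parts N j"
  shows "odd_count_parts (mset_set T + doubled_odds j) = T"
  unfolding odd_count_parts_def count_recompose[OF assms] by auto

lemma optional_parts_odd: "x \<in> optional_parts N j \<Longrightarrow> odd x \<Longrightarrow> x \<in> small_odds j"
  by (auto simp: optional_parts_def large_evens_def)

lemma optional_parts_even: "x \<in> optional_parts N j \<Longrightarrow> even x \<Longrightarrow> 4*j + 2 \<le> x"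
  by (auto simp: optional_parts_def small_odds_def large_evens_def)

lemma mem_recompose_iff:
  assumes "T \<subseteq> optional_parts N j"
  shows "x \<in># mset_set T + doubled_odds j \<longleftrightarrow> x \<in> T \<or> x \<in> small_odds j"
  unfolding count_greater_zero_iff[symmetric] count_recompose[OF assms] by simp

lemma recompose_is_partition:
  assumes T: "T \<subseteq> optional_parts N j" and sum: "\<Sum>T + 2*j^2 = n"
  shows "is_partition n (mset_set T + doubled_odds j)"
  unfolding is_partition_def
proof
  show "\<forall>x\<in>#mset_set T + doubled_odds j. 0 < x"
  proof
    fix x
    assume x: "x \<in># mset_set T + doubled_odds j"
    show "0 < x"
    proof (cases "odd x")
      case False
      then have "x \<in> T"
        using x mem_recompose_iff[OF T] by (auto simp: small_odds_def)
      then have "4*j + 2 \<le> x"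
        using False T optional_parts_even by blast
      then show ?thesis
        by simp
    qed (rule odd_pos)
  qed
  show "sum_mset (mset_set T + doubled_odds j) = n"
    using sum finite_subset[OF T finite_optional_parts]
    by (simp add: sum_doubled_odds sum_mset_mset_set)
qed

lemma recompose_c5_shape:
  assumes T: "T \<subseteq> optional_parts N j"
  shows "c5_shape j (mset_set T + doubled_odds j)"
  unfolding c5_shape_def
proof (intro conjI ballI impI)
  note parts = mem_recompose_iff[OF T] and count = count_recompose[OF T]
  have small_odd: "x \<in> small_odds j \<Longrightarrow> odd x" for x
    by (simp add: small_odds_def)
  show "{x \<in> set_mset (mset_set T + doubled_odds j). odd x} = small_odds j"
    using parts optional_parts_odd T small_odd by blast
  fix x
  assume "x \<in># mset_set T + doubled_odds j"
  then have x: "x \<in> T \<or> x \<in> small_odds j"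
    using parts by blast
  show "count (mset_set T + doubled_odds j) x = 2 \<or> count (mset_set T + doubled_odds j) x = 3"
    if "odd x"
    using x that optional_parts_odd T unfolding count by auto
  show "count (mset_set T + doubled_odds j) x = 1" and "4*j + 2 \<le> x"
    if "even x"
    using x that small_odd optional_parts_even T unfolding count by auto
qed

lemma bij_betw_c5_shape:
  assumes "n \<le> 4*N"
  shows "bij_betw (\<lambda>T. mset_set T + doubled_odds j)
           {T. T \<subseteq> optional_parts N j \<and> \<Sum>T + 2*j^2 = n} {M. is_partition n M \<and> c5_shape j M}"
proof (rule bij_betw_byWitness[where f' = odd_count_parts])
  show "\<forall>T\<in>{T. T \<subseteq> optional_parts N j \<and> \<Sum>T + 2*j^2 = n}.
          odd_count_parts (mset_set T + doubled_odds j) = T"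
    using odd_count_parts_recompose by blast
  show "\<forall>M\<in>{M. is_partition n M \<and> c5_shape j M}. mset_set (odd_count_parts M) + doubled_odds j = M"
    using c5_shape_decompose by auto
  show "(\<lambda>T. mset_set T + doubled_odds j) ` {T. T \<subseteq> optional_parts N j \<and> \<Sum>T + 2*j^2 = n}
      \<subseteq> {M. is_partition n M \<and> c5_shape j M}"
  proof (rule image_subsetI)
    fix T
    assume "T \<in> {T. T \<subseteq> optional_parts N j \<and> \<Sum>T + 2*j^2 = n}"
    then show "mset_set T + doubled_odds j \<in> {M. is_partition n M \<and> c5_shape j M}"
      using recompose_is_partition[of T N j n] recompose_c5_shape[of T N j] by simp
  qed
  show "odd_count_parts ` {M. is_partition n M \<and> c5_shape j M}
      \<subseteq> {T. T \<subseteq> optional_parts N j \<and> \<Sum>T + 2*j^2 = n}"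
  proof clarify
    fix M
    assume M: "is_partition n M" "c5_shape j M"
    have "n = sum_mset (mset_set (odd_count_parts M) + doubled_odds j)"
      using M c5_shape_decompose by (simp add: is_partition_def)
    then have "\<Sum>(odd_count_parts M) + 2*j^2 = n"
      by (simp add: sum_doubled_odds sum_mset_mset_set finite_odd_count_parts)
    then show "odd_count_parts M \<subseteq> optional_parts N j \<and> \<Sum>(odd_count_parts M) + 2*j^2 = n"
      using odd_count_parts_subset[OF M assms] by simp
  qed
qed

lemma card_c5_shape:
  assumes "n \<le> 4*N"
  shows "card {M. is_partition n M \<and> c5_shape j M}
       = (if 2*j^2 \<le> n then card {T. T \<subseteq> optional_parts N j \<and> \<Sum>T = n - 2*j^2} else 0)"
proof -
  have "card {M. is_partition n M \<and> c5_shape j M} = card {T. T \<subseteq> optional_parts N j \<and> \<Sum>T + 2*j^2 = n}"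
    using bij_betw_same_card[OF bij_betw_c5_shape[OF assms]] by simp
  also have "{T. T \<subseteq> optional_parts N j \<and> \<Sum>T + 2*j^2 = n}
      = (if 2*j^2 \<le> n then {T. T \<subseteq> optional_parts N j \<and> \<Sum>T = n - 2*j^2} else {})"
    by auto
  finally show ?thesis
    by simp
qed

lemma finite_c5_shape: "finite {M. is_partition n M \<and> c5_shape j M}"
proof -
  have "finite {T. T \<subseteq> optional_parts n j \<and> \<Sum>T + 2*j^2 = n}"
    by (rule finite_subset[of _ "Pow (optional_parts n j)"]) (auto simp: finite_optional_parts)
  then show ?thesis
    using bij_betw_finite[OF bij_betw_c5_shape[of n n j]] by simp
qed

lemma c5_shape_le:
  assumes "is_partition n M" and "c5_shape j M"
  shows "j \<le> n"
proof -
  have "n = sum_mset (mset_set (odd_count_parts M) + doubled_odds j)"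
    using assms c5_shape_decompose by (simp add: is_partition_def)
  then have "j^2 \<le> n"
    by (simp add: sum_doubled_odds)
  moreover have "j \<le> j^2"
    by (simp add: power2_eq_square)
  ultimately show ?thesis
    by linarith
qed

lemma small_odds_eq_image: "small_odds j = (\<lambda>i. 2*i + 1) ` {..<j}"
proof
  show "small_odds j \<subseteq> (\<lambda>i. 2*i + 1) ` {..<j}"
  proof
    fix x
    assume "x \<in> small_odds j"
    then obtain i where "x = 2*i + 1" "i < j"
      unfolding small_odds_def by (auto elim: oddE)
    then show "x \<in> (\<lambda>i. 2*i + 1) ` {..<j}"
      by blast
  qed
qed (auto simp: small_odds_def)

lemma card_small_odds: "card (small_odds j) = j"
  unfolding small_odds_eq_image by (subst card_image) (auto simp: inj_on_def)

lemma c5_shape_unique: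
  assumes "c5_shape j M" and "c5_shape k M"
  shows "j = k"
proof -
  have "small_odds j = small_odds k"
    using assms unfolding c5_shape_def by auto
  then show ?thesis
    by (metis card_small_odds)
qed

lemma c5_condA_iff:
  assumes "is_partition n M"
  shows "c5_condA M \<longleftrightarrow> c5_shape 0 M"
proof
  assume "c5_condA M"
  then have even: "\<And>x. x \<in># M \<Longrightarrow> even x" and once: "\<And>x. count M x \<le> 1"
    unfolding c5_condA_def by auto
  have pos: "\<And>x. x \<in># M \<Longrightarrow> 0 < x"
    using assms unfolding is_partition_def by auto
  show "c5_shape 0 M"
    unfolding c5_shape_def
  proof (intro conjI ballI impI)
    show "{x \<in> set_mset M. odd x} = small_odds 0"
      using even by (auto simp: small_odds_def)
  next
    fix x
    assume "x \<in># M" "odd x"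
    then show "count M x = 2 \<or> count M x = 3"
      using even by blast
  next
    fix x
    assume "x \<in># M" "even x"
    then have "0 < count M x" and "0 < x"
      using pos by auto
    then show "count M x = 1" and "4*0 + 2 \<le> x"
      using once[of x] \<open>even x\<close> by (linarith, auto elim!: evenE)
  qed
next
  assume shape: "c5_shape 0 M"
  then have even: "\<And>x. x \<in># M \<Longrightarrow> even x"
    unfolding c5_shape_def small_odds_def by auto
  then have "\<And>x. x \<in># M \<Longrightarrow> count M x = 1"
    using shape unfolding c5_shape_def by blast
  then show "c5_condA M"
    unfolding c5_condA_def using even by (metis le_refl not_in_iff zero_le)
qed

lemma small_odds_eq: "{2*i - 1 | i. 1 \<le> i \<and> i \<le> j} = small_odds j"
proof
  show "{2*i - 1 | i. 1 \<le> i \<and> i \<le> j} \<subseteq> small_odds j"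
    by (auto simp: small_odds_def)
  show "small_odds j \<subseteq> {2*i - 1 | i. 1 \<le> i \<and> i \<le> j}"
  proof
    fix x
    assume "x \<in> small_odds j"
    then obtain k where "x = 2*k + 1" "k < j"
      unfolding small_odds_def by (auto elim: oddE)
    then have "x = 2*(k + 1) - 1 \<and> 1 \<le> k + 1 \<and> k + 1 \<le> j"
      by simp
    then show "x \<in> {2*i - 1 | i. 1 \<le> i \<and> i \<le> j}"
      by blast
  qed
qed

lemma c5_condB_iff: "c5_condB M \<longleftrightarrow> (\<exists>j. 1 \<le> j \<and> c5_shape j M)"
  unfolding c5_condB_def c5_shape_def small_odds_eq ..

lemma c5_eq_sum_card_c5_shape:
  assumes "n \<le> N"
  shows "c5 n = (\<Sum>j\<le>N. card {M. is_partition n M \<and> c5_shape j M})"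
proof -
  have "{M. is_partition n M \<and> (c5_condA M \<or> c5_condB M)} = (\<Union>j\<le>N. {M. is_partition n M \<and> c5_shape j M})"
  proof (intro equalityI subsetI)
    fix M
    assume "M \<in> {M. is_partition n M \<and> (c5_condA M \<or> c5_condB M)}"
    then have M: "is_partition n M" and "c5_condA M \<or> c5_condB M"
      by auto
    then obtain j where "c5_shape j M"
      using c5_condA_iff[OF M] c5_condB_iff by blast
    moreover have "j \<le> N"
      using c5_shape_le[OF M \<open>c5_shape j M\<close>] assms by simp
    ultimately show "M \<in> (\<Union>j\<le>N. {M. is_partition n M \<and> c5_shape j M})"
      using M by blast
  next
    fix M
    assume "M \<in> (\<Union>j\<le>N. {M. is_partition n M \<and> c5_shape j M})"
    then obtain j where M: "is_partition n M" and "c5_shape j M"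
      by blast
    then show "M \<in> {M. is_partition n M \<and> (c5_condA M \<or> c5_condB M)}"
      using c5_condA_iff[OF M] c5_condB_iff by (cases "j = 0") auto
  qed
  then have "c5 n = card (\<Union>j\<le>N. {M. is_partition n M \<and> c5_shape j M})"
    unfolding c5_def by simp
  also have "\<dots> = (\<Sum>j\<le>N. card {M. is_partition n M \<and> c5_shape j M})"
    by (rule card_UN_disjoint) (auto simp: finite_c5_shape dest: c5_shape_unique)
  finally show ?thesis .
qed

section \<open>Reduction modulo two\<close>

lemma fps_two_eq_0: "(2::'a::comm_ring_1) = 0 \<Longrightarrow> (2::'a fps) = 0"
  by (rule fps_ext) (simp add: fps_numeral_nth)

lemma of_nat_bit: "(of_nat k :: bit) = (if odd k then 1 else 0)"
  by (induction k) auto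

lemma one_minus_eq_one_plus_bit_fps: "(1::bit fps) - a = 1 + a"
  using uminus_eq_self_char_2[OF fps_two_eq_0[OF bit_2_eq_0], of a] by (simp only: diff_conv_add_uminus)

lemma qpoch_X_power_bit_fps:
  "qpoch ((fps_X :: bit fps)^2) (fps_X^k) m = (\<Prod>a\<in>(\<lambda>i. k + 2*i) ` {..<m}. 1 + fps_X^a)"
proof -
  have "qpoch ((fps_X :: bit fps)^2) (fps_X^k) m = (\<Prod>i<m. 1 + fps_X^(k + 2*i))"
    by (simp add: qpoch_def power_mult[symmetric] power_add one_minus_eq_one_plus_bit_fps)
  also have "\<dots> = (\<Prod>a\<in>(\<lambda>i. k + 2*i) ` {..<m}. 1 + fps_X^a)"
    by (subst prod.reindex) (auto simp: inj_on_def)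
  finally show ?thesis .
qed

lemma large_evens_eq_image: "j \<le> N \<Longrightarrow> large_evens N j = (\<lambda>i. (4*j + 2) + 2*i) ` {..<2*N - 2*j}"
proof
  assume "j \<le> N"
  show "large_evens N j \<subseteq> (\<lambda>i. (4*j + 2) + 2*i) ` {..<2*N - 2*j}"
  proof
    fix x
    assume "x \<in> large_evens N j"
    then obtain k where x: "x = 2*k" "4*j + 2 \<le> x" "x \<le> 4*N"
      unfolding large_evens_def by (auto elim: evenE)
    then have "x = (4*j + 2) + 2*(k - (2*j + 1))" "k - (2*j + 1) < 2*N - 2*j"
      by auto
    then show "x \<in> (\<lambda>i. (4*j + 2) + 2*i) ` {..<2*N - 2*j}"
      by blast
  qed
qed (auto simp: large_evens_def)

lemma qpoch_mult_qpoch_bit_fps: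
  assumes "j \<le> N"
  shows "qpoch ((fps_X :: bit fps)^2) fps_X j * qpoch (fps_X^2) ((fps_X^2)^(2*j + 1)) (2*N - 2*j)
       = (\<Prod>a\<in>optional_parts N j. 1 + fps_X^a)"
proof -
  have power: "((fps_X :: bit fps)^2)^(2*j + 1) = fps_X^(4*j + 2)"
    using power_mult[of "fps_X :: bit fps" 2 "2*j + 1"] by simp
  have "qpoch ((fps_X :: bit fps)^2) fps_X j = (\<Prod>a\<in>small_odds j. 1 + fps_X^a)"
    using qpoch_X_power_bit_fps[of 1 j] by (simp add: small_odds_eq_image add.commute)
  moreover have "qpoch ((fps_X :: bit fps)^2) ((fps_X^2)^(2*j + 1)) (2*N - 2*j)
      = (\<Prod>a\<in>large_evens N j. 1 + fps_X^a)"
    unfolding power large_evens_eq_image[OF assms] by (rule qpoch_X_power_bit_fps)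
  moreover have "small_odds j \<inter> large_evens N j = {}"
    by (auto simp: small_odds_def large_evens_def)
  ultimately show ?thesis
    unfolding optional_parts_def
    using finite_optional_parts[of N j]
    by (simp add: prod.union_disjoint optional_parts_def)
qed

lemma fps_nth_lhs_term:
  assumes "j \<le> N" and "n \<le> N"
  shows "fps_nth (((fps_X :: bit fps)^2)^(j^2) * qpoch (fps_X^2) fps_X j * lhs_weight (fps_X^2) N j) n
       = (if 2*j^2 \<le> n then of_nat (card {T. T \<subseteq> optional_parts N j \<and> \<Sum>T = n - 2*j^2}) else 0)"
proof -
  define B where "B = qpoch ((fps_X :: bit fps)^2) ((fps_X^2)^(N - j + 1)) j"
  have eq: "((fps_X :: bit fps)^2)^(j^2) * qpoch (fps_X^2) fps_X j * lhs_weight (fps_X^2) N j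
      = (fps_X^(2*j^2) * (\<Prod>a\<in>optional_parts N j. 1 + fps_X^a)) * B"
    unfolding lhs_weight_def B_def qpoch_mult_qpoch_bit_fps[OF assms(1), symmetric]
    by (simp add: power_mult[symmetric] algebra_simps)
  show ?thesis
  proof (cases "2*j^2 \<le> n")
    case False
    then show ?thesis
      unfolding eq by (simp add: mult.assoc fps_X_power_mult_nth)
  next
    case True
    moreover have "2*j \<le> 2*j^2"
      by (simp add: power2_eq_square)
    ultimately have "fps_cutoff (Suc n) B = 1"
      unfolding B_def power_mult[symmetric] using assms by (intro fps_cutoff_qpoch_X_power) simp
    then show ?thesis
      unfolding eq fps_nth_mult_cutoff_eq_1[OF \<open>fps_cutoff (Suc n) B = 1\<close>] fps_X_power_mult_nth
      using True by (simp add: fps_nth_prod_one_plus_X_power finite_optional_parts)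
  qed
qed

lemma fps_nth_lhs_sum:
  assumes "n \<le> N"
  shows "fps_nth (\<Sum>j\<le>N. ((fps_X :: bit fps)^2)^(j^2) * qpoch (fps_X^2) fps_X j * lhs_weight (fps_X^2) N j) n
       = of_nat (c5 n)"
proof -
  have "fps_nth (\<Sum>j\<le>N. ((fps_X :: bit fps)^2)^(j^2) * qpoch (fps_X^2) fps_X j * lhs_weight (fps_X^2) N j) n
      = (\<Sum>j\<le>N. of_nat (card {M. is_partition n M \<and> c5_shape j M}))"
    unfolding fps_sum_nth using assms
    by (intro sum.cong) (simp_all add: fps_nth_lhs_term card_c5_shape[of n N])
  also have "\<dots> = of_nat (c5 n)"
    using c5_eq_sum_card_c5_shape[OF assms] by simp
  finally show ?thesis .
qed

lemma fps_nth_rhs_term: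
  assumes rN: "\<bar>r\<bar> \<le> int N" and nN: "n \<le> N"
  shows "fps_nth ((fps_X :: bit fps)^nat (pent r) * (fps_X^2)^(nat \<bar>r\<bar>^2) * rhs_weight (fps_X^2) N (nat \<bar>r\<bar>)) n
       = (if 2 * int n = 7*r^2 - r then 1 else 0)"
proof -
  define s where "s = nat \<bar>r\<bar>"
  define e where "e = nat (pent r) + 2*s^2"
  have s: "s \<le> N" "int (s^2) = r^2"
    using rN unfolding s_def by simp_all
  have eq: "(fps_X :: bit fps)^nat (pent r) * (fps_X^2)^(s^2) * rhs_weight (fps_X^2) N s
      = fps_X^e * rhs_weight (fps_X^2) N s"
    unfolding e_def by (simp add: power_add power_mult)
  have "2 * int e = 7*r^2 - r"
    using two_pent[of r] pent_nonneg[of r] s(2) unfolding e_def by (simp add: algebra_simps power2_eq_square)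
  then have e_eq: "n = e \<longleftrightarrow> 2 * int n = 7*r^2 - r"
    by linarith
  show ?thesis
  proof (cases "e \<le> n")
    case False
    then show ?thesis
      unfolding s_def[symmetric] eq fps_X_power_mult_nth using e_eq by auto
  next
    case True
    have "s \<le> s^2"
      unfolding power2_eq_square by (rule le_square)
    then have "2*s \<le> n"
      using True unfolding e_def by linarith
    then have "fps_cutoff (Suc n) (qpoch ((fps_X :: bit fps)^2) ((fps_X^2)^(N + s + 1)) (N - s)) = 1"
      and "fps_cutoff (Suc n) (qpoch ((fps_X :: bit fps)^2) ((fps_X^2)^(N - s + 1)) s) = 1"
      using nN s(1) unfolding power_mult[symmetric] by (intro fps_cutoff_qpoch_X_power; simp)+
    then have weight: "fps_cutoff (Suc n) (rhs_weight ((fps_X :: bit fps)^2) N s) = 1"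
      unfolding rhs_weight_def by (rule fps_cutoff_mult_eq_1)
    show ?thesis
      unfolding s_def[symmetric] eq fps_nth_mult_cutoff_eq_1[OF weight] using e_eq by simp
  qed
qed

lemma seven_pent_unique: "7*r^2 - r = 7*r'^2 - (r'::int) \<Longrightarrow> r = r'"
proof (rule ccontr)
  assume eq: "7*r^2 - r = 7*r'^2 - r'" and ne: "r \<noteq> r'"
  have "(r - r') * (7*(r + r') - 1) = 0"
    using eq by (simp add: power2_eq_square algebra_simps)
  then have "7*(r + r') = 1"
    using ne by simp
  then show False
    by presburger
qed

lemma abs_le_power2_int: "\<bar>r::int\<bar> \<le> r^2"
proof (cases "r = 0")
  case False
  then have "\<bar>r\<bar> * 1 \<le> \<bar>r\<bar> * \<bar>r\<bar>"
    by (intro mult_left_mono) auto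
  then show ?thesis
    by (simp add: power2_eq_square abs_mult_self_eq)
qed simp

lemma sum_seven_pent_indicator:
  assumes "2*n \<le> N"
  shows "(\<Sum>r\<in>{-int N..int N}. if 2 * int n = 7*r^2 - r then 1 else 0 :: 'a::comm_ring_1)
       = (if \<exists>j::int. 2 * int n = 7*j^2 + j then 1 else 0)"
proof (cases "\<exists>r::int. 2 * int n = 7*r^2 - r")
  case True
  then obtain r0 where r0: "2 * int n = 7*r0^2 - r0"
    by blast
  have "\<bar>r0\<bar> \<le> 2 * int n"
    using abs_le_power2_int[of r0] r0 by linarith
  then have "r0 \<in> {-int N..int N}"
    using assms by auto
  moreover have "2 * int n = 7*r^2 - r \<longleftrightarrow> r = r0" for r
    using r0 seven_pent_unique[of r r0] by auto
  moreover have "\<exists>j::int. 2 * int n = 7*j^2 + j"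
    using r0 by (intro exI[of _ "-r0"]) simp
  ultimately show ?thesis
    by simp
next
  case False
  have "\<not> (\<exists>j::int. 2 * int n = 7*j^2 + j)"
  proof
    assume "\<exists>j::int. 2 * int n = 7*j^2 + j"
    then obtain j :: int where "2 * int n = 7*(-j)^2 - (-j)"
      by auto
    with False show False
      by blast
  qed
  then show ?thesis
    using False by simp
qed

lemma fps_nth_rhs_sum:
  assumes "2*n \<le> N"
  shows "fps_nth (\<Sum>r\<in>{-int N..int N}. (fps_X :: bit fps)^nat (pent r) * (fps_X^2)^(nat \<bar>r\<bar>^2)
           * rhs_weight (fps_X^2) N (nat \<bar>r\<bar>)) n
       = (if \<exists>j::int. 2 * int n = 7*j^2 + j then 1 else 0)"
  unfolding fps_sum_nth sum_seven_pent_indicator[OF assms, symmetric] using assms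
  by (intro sum.cong) (auto simp: fps_nth_rhs_term)

lemma c5_mod_2: "(of_nat (c5 n) :: bit) = (if \<exists>j::int. 2 * int n = 7*j^2 + j then 1 else 0)"
proof -
  let ?X = "fps_X :: bit fps"
  have "(of_nat (c5 n) :: bit)
      = fps_nth (\<Sum>j\<le>2*n. (?X^2)^(j^2) * qpoch (?X^2) ?X j * lhs_weight (?X^2) (2*n) j) n"
    by (simp add: fps_nth_lhs_sum)
  also have "\<dots> = fps_nth (\<Sum>r\<in>{-int (2*n)..int (2*n)}.
      ?X^nat (pent r) * (?X^2)^(nat \<bar>r\<bar>^2) * rhs_weight (?X^2) (2*n) (nat \<bar>r\<bar>)) n"
    by (simp only: bailey_identity_char_2[OF fps_two_eq_0[OF bit_2_eq_0] qfact_fps_X_nonzero])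
  also have "\<dots> = (if \<exists>j::int. 2 * int n = 7*j^2 + j then 1 else 0)"
    by (rule fps_nth_rhs_sum) simp
  finally show ?thesis .
qed

theorem theorem6:
  fixes n :: nat
  shows "odd (c5 n) \<longleftrightarrow> (\<exists>j::int. 2 * int n = 7 * j^2 + j)"
proof -
  define P where "P \<longleftrightarrow> (\<exists>j::int. 2 * int n = 7 * j^2 + j)"
  have "(if odd (c5 n) then 1 else 0 :: bit) = (if P then 1 else 0)"
    using c5_mod_2[of n] unfolding P_def of_nat_bit .
  then show ?thesis
    unfolding P_def[symmetric] by (auto split: if_splits)
qed
end
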